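(* Let $d\ge 1$, $k\ge1$ and let $(\vec n)$ be a $d\times k$ matrix of nonnegative integers. If $k\le d$, then for all $0<\epsilon<L$ the modified analytic weight $\widetilde W^{k,(\vec n)}_{\epsilon<L}$ is identically zero as a distribution on $(\mathbb{C}^d)^k$; indeed the form $\left(\frac{\partial}{\partial z^k}\right)^{\vec n^k}K^{an}_\epsilon(z^1,z^k)\prod_{\alpha=1}^{k-1}\left(\frac{\partial}{\partial z^\alpha}\right)^{\vec n^\alpha}P^{an}_{\epsilon<L}(z^\alpha,z^{\alpha+1})$ vanishes identically.
   Context: On $(\mathbb{C}^d)^k$ use coordinates $z^\alpha=(z^\alpha_1,\dots,z^\alpha_d)$ and $d^dz^\alpha=dz^\alpha_1\wedge\cdots\wedge dz^\alpha_d$. Analytic heat kernel: $K^{an}_t(z,w)=(2\pi i t)^{-d}e^{-|z-w|^2/4t}\prod_{i=1}^d(d\bar z_i-d\bar w_i)$ for $t>0$. Analytic propagator: $P^{an}_{\epsilon<L}(z,w)=\int_\epsilon^L dt\,(2\pi i t)^{-d}\sum_{j=1}^d(-1)^{j-1}\frac{\bar z_j-\bar w_j}{4t}e^{-|z-w|^2/4t}\prod_{i\neq j}(d\bar z_i-d\bar w_i)$. Write $\left(\frac{\partial}{\partial z^\alpha}\right)^{\vec n^\alpha}=\prod_{i=1}^d\frac{\partial^{n^\alpha_i}}{\partial (z^\alpha_i)^{n^\alpha_i}}$. The modified analytic weight is the distribution on $\Phi\in\Omega^{0,*}_c((\mathbb{C}^d)^k)$ $$\widetilde W^{k,(\vec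 n)}_{\epsilon<L}(\Phi)=\int_{(\mathbb{C}^d)^k}\prod_{\alpha=1}^k d^dz^\alpha\,\Phi\,\left(\frac{\partial}{\partial z^k}\right)^{\vec n^k}K^{an}_\epsilon(z^1,z^k)\prod_{\alpha=1}^{k-1}\left(\frac{\partial}{\partial z^\alpha}\right)^{\vec n^\alpha}P^{an}_{\epsilon<L}(z^\alpha,z^{\alpha+1}),$$ integrating the top-degree component. *)

theory Defs
  imports "HOL-Analysis.Analysis"
begin

text \<open>Coordinates on (C^d)^k: a point is a function on index pairs (alpha, i),
  alpha in {1..k}, i in {1..d}; the value at (alpha,i) is the coordinate z^alpha_i.\<close>
type_synonym pt = "nat \<times> nat \<Rightarrow> complex"

text \<open>A (0,*)-form: for each finite set S of index pairs, the coefficient function of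
  the basis form dzbar_S = wedge of dzbar_p over p in S, taken in increasing
  lexicographic order of (alpha, i).\<close>
type_synonym form = "(nat \<times> nat) set \<Rightarrow> pt \<Rightarrow> complex"

definition lex_less :: "nat \<times> nat \<Rightarrow> nat \<times> nat \<Rightarrow> bool" where
  "lex_less p q \<longleftrightarrow> fst p < fst q \<or> (fst p = fst q \<and> snd p < snd q)"

text \<open>Number of inversions: dzbar_A wedge dzbar_B = (-1)^(inv_count A B) dzbar_(A union B)
  for disjoint A, B.\<close>
definition inv_count :: "(nat \<times> nat) set \<Rightarrow> (nat \<times> nat) set \<Rightarrow> nat" where
  "inv_count A B = card {(a, b). a \<in> A \<and> b \<in> B \<and> lex_less b a}"

definition wedge :: "form \<Rightarrow> form \<Rightarrow> form" where
  "wedge \<omega> \<eta> S z = (if finite S then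
      (\<Sum>A\<in>Pow S. (-1::complex) ^ inv_count A (S - A) * \<omega> A z * \<eta> (S - A) z) else 0)"

definition scal_form :: "(pt \<Rightarrow> complex) \<Rightarrow> form" where
  "scal_form f S z = (if S = {} then f z else 0)"

definition smul_form :: "(pt \<Rightarrow> complex) \<Rightarrow> form \<Rightarrow> form" where
  "smul_form f \<omega> S z = f z * \<omega> S z"

primrec wedge_list :: "form list \<Rightarrow> form" where
  "wedge_list [] = scal_form (\<lambda>_. 1)"
| "wedge_list (\<omega> # \<omega>s) = wedge \<omega> (wedge_list \<omega>s)"

definition dzbar :: "nat \<times> nat \<Rightarrow> form" where
  "dzbar p S z = (if S = {p} then 1 else 0)"

definition dzbar_diff :: "nat \<Rightarrow> nat \<Rightarrow> nat \<Rightarrow> form" where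
  "dzbar_diff a b i S z = dzbar (a, i) S z - dzbar (b, i) S z"

definition wirt :: "nat \<times> nat \<Rightarrow> (pt \<Rightarrow> complex) \<Rightarrow> pt \<Rightarrow> complex" where
  "wirt p f z =
     (vector_derivative (\<lambda>t::real. f (z(p := z p + of_real t))) (at 0)
      - \<i> * vector_derivative (\<lambda>t::real. f (z(p := z p + \<i> * of_real t))) (at 0)) / 2"

definition deriv_alpha :: "nat \<Rightarrow> nat \<Rightarrow> (nat \<Rightarrow> nat) \<Rightarrow> (pt \<Rightarrow> complex) \<Rightarrow> pt \<Rightarrow> complex" where
  "deriv_alpha d \<alpha> nv f = foldr (\<lambda>i g. (wirt (\<alpha>, i) ^^ nv i) g) [1..<d+1] f"

definition form_deriv :: "nat \<Rightarrow> nat \<Rightarrow> (nat \<Rightarrow> nat) \<Rightarrow> form \<Rightarrow> form" where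
  "form_deriv d \<alpha> nv \<omega> S = deriv_alpha d \<alpha> nv (\<omega> S)"

definition sqdist :: "nat \<Rightarrow> nat \<Rightarrow> nat \<Rightarrow> pt \<Rightarrow> real" where
  "sqdist d a b z = (\<Sum>i=1..d. (cmod (z (a, i) - z (b, i)))\<^sup>2)"

definition Kan :: "nat \<Rightarrow> real \<Rightarrow> nat \<Rightarrow> nat \<Rightarrow> form" where
  "Kan d t a b = smul_form
     (\<lambda>z. inverse ((2 * of_real pi * \<i> * of_real t) ^ d) * exp (- of_real (sqdist d a b z / (4 * t))))
     (wedge_list (map (dzbar_diff a b) [1..<d+1]))"

definition Pan :: "nat \<Rightarrow> real \<Rightarrow> real \<Rightarrow> nat \<Rightarrow> nat \<Rightarrow> form" where
  "Pan d \<epsilon> L a b S z = (\<Sum>j=1..d. (-1::complex) ^ (j - 1) *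
      integral {\<epsilon>..L} (\<lambda>t::real. inverse ((2 * of_real pi * \<i> * of_real t) ^ d)
          * ((cnj (z (a, j)) - cnj (z (b, j))) / (4 * of_real t))
          * exp (- of_real (sqdist d a b z / (4 * t))))
      * wedge_list (map (dzbar_diff a b) (filter (\<lambda>i. i \<noteq> j) [1..<d+1])) S z)"

text \<open>The form (d/dz^k)^(n^k) K_eps(z^1,z^k) prod_{alpha=1}^{k-1} (d/dz^alpha)^(n^alpha) P(z^alpha,z^(alpha+1)).
  n alpha i is the entry n^alpha_i of the d x k matrix.\<close>
definition W_form :: "nat \<Rightarrow> nat \<Rightarrow> real \<Rightarrow> real \<Rightarrow> (nat \<Rightarrow> nat \<Rightarrow> nat) \<Rightarrow> form" where
  "W_form d k \<epsilon> L n = wedge (form_deriv d k (n k) (Kan d \<epsilon> 1 k))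
     (wedge_list (map (\<lambda>\<alpha>. form_deriv d \<alpha> (n \<alpha>) (Pan d \<epsilon> L \<alpha> (\<alpha> + 1))) [1..<k]))"

definition index_set :: "nat \<Rightarrow> nat \<Rightarrow> (nat \<times> nat) set" where
  "index_set d k = {1..k} \<times> {1..d}"

text \<open>Modified analytic weight: integral of the top-degree component of
  prod d^dz^alpha  Phi  (form); the top-degree antiholomorphic coefficient is integrated
  against Lebesgue measure on (C^d)^k (the orientation constant relating
  d^{dk}z d^{dk}zbar to Lebesgue measure is a nonzero constant and is dropped).\<close>
definition modified_weight :: "nat \<Rightarrow> nat \<Rightarrow> real \<Rightarrow> real \<Rightarrow> (nat \<Rightarrow> nat \<Rightarrow> nat) \<Rightarrow> form \<Rightarrow> complex" where
  "modified_weight d k \<epsilon> L n \<Phi> =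
     integral\<^sup>L (PiM (index_set d k) (\<lambda>_. lborel))
       (\<lambda>z. wedge \<Phi> (W_form d k \<epsilon> L n) (index_set d k) z)"

end

(*
  The heat kernel factor is a multiple of the d-form prod_i (dzbar^1_i - dzbar^k_i), and each
  propagator factor P(z^alpha, z^(alpha+1)) is a sum of multiples of products of d - 1 of the
  one-forms dzbar^alpha_i - dzbar^(alpha+1)_i, one index j_alpha being omitted. The holomorphic
  derivatives only act on the coefficients, and they are linear on the algebra the coefficients
  live in, so they do not change this shape. The k - 1 < d propagators omit fewer than d indices,
  so some index i is omitted by none of them. Telescoping
  dzbar^1_i - dzbar^k_i = sum_(alpha<k) (dzbar^alpha_i - dzbar^(alpha+1)_i) then produces, in
  every term, a one-form that already occurs in the wedge product, so every term vanishes.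
*)
theory Submission
  imports Defs
begin

section \<open>Wedge products of one-forms\<close>

definition one_form :: "form \<Rightarrow> bool" where
  "one_form \<omega> \<longleftrightarrow> (\<forall>T z. (\<forall>p. T \<noteq> {p}) \<longrightarrow> \<omega> T z = 0)"

definition lex_rank :: "nat \<times> nat \<Rightarrow> (nat \<times> nat) set \<Rightarrow> nat" where
  "lex_rank p S = card {q\<in>S. lex_less q p}"

lemma lex_less_irrefl: "\<not> lex_less p p"
  by (auto simp: lex_less_def)

lemma lex_less_asym: "lex_less p q \<Longrightarrow> \<not> lex_less q p"
  by (auto simp: lex_less_def)

lemma lex_less_linear: "p \<noteq> q \<Longrightarrow> lex_less p q \<or> lex_less q p"
  by (cases p; cases q) (auto simp: lex_less_def)

lemma one_formD: "one_form \<omega> \<Longrightarrow> (\<And>p. T \<noteq> {p}) \<Longrightarrow> \<omega> T z = 0"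
  unfolding one_form_def by blast

lemma one_form_dzbar_diff: "one_form (dzbar_diff a b i)"
  unfolding one_form_def dzbar_diff_def dzbar_def by auto

lemma wedge_infinite [simp]: "infinite S \<Longrightarrow> wedge \<omega> \<eta> S z = 0"
  by (simp add: wedge_def)

lemma inv_count_singleton: "inv_count {p} (S - {p}) = lex_rank p S"
proof -
  have "{(a, b). a \<in> {p} \<and> b \<in> S - {p} \<and> lex_less b a} = Pair p ` {q\<in>S. lex_less q p}"
    by (auto simp: lex_less_irrefl)
  then show ?thesis
    unfolding inv_count_def lex_rank_def by (simp add: card_image inj_on_def)
qed

lemma wedge_one_form_left:
  assumes \<omega>: "one_form \<omega>" and S: "finite S"
  shows "wedge \<omega> \<eta> S z = (\<Sum>p\<in>S. (-1) ^ lex_rank p S * \<omega> {p} z * \<eta> (S - {p}) z)"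
proof -
  have "wedge \<omega> \<eta> S z = (\<Sum>A\<in>Pow S. (-1) ^ inv_count A (S - A) * \<omega> A z * \<eta> (S - A) z)"
    using S by (simp add: wedge_def)
  also have "\<dots> = (\<Sum>A\<in>(\<lambda>p. {p}) ` S. (-1) ^ inv_count A (S - A) * \<omega> A z * \<eta> (S - A) z)"
  proof (rule sum.mono_neutral_right)
    show "\<forall>A\<in>Pow S - (\<lambda>p. {p}) ` S. (-1) ^ inv_count A (S - A) * \<omega> A z * \<eta> (S - A) z = 0"
    proof
      fix A assume "A \<in> Pow S - (\<lambda>p. {p}) ` S"
      then have "\<omega> A z = 0" by (intro one_formD[OF \<omega>]) blast
      then show "(-1) ^ inv_count A (S - A) * \<omega> A z * \<eta> (S - A) z = 0" by simp
    qed
  qed (use S in auto)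
  also have "\<dots> = (\<Sum>p\<in>S. (-1) ^ lex_rank p S * \<omega> {p} z * \<eta> (S - {p}) z)"
    by (subst sum.reindex) (auto simp: inj_on_def inv_count_singleton)
  finally show ?thesis .
qed

lemma lex_rank_Diff_less:
  assumes "finite S" "q \<in> S" "lex_less q p"
  shows "lex_rank p S = Suc (lex_rank p (S - {q}))"
proof -
  have "{x\<in>S. lex_less x p} = insert q {x\<in>S - {q}. lex_less x p}"
    using assms by auto
  then show ?thesis unfolding lex_rank_def using assms by simp
qed

lemma lex_rank_Diff_not_less: "\<not> lex_less q p \<Longrightarrow> lex_rank p (S - {q}) = lex_rank p S"
  unfolding lex_rank_def by (intro arg_cong[where f=card]) auto

text \<open>The smaller of p and q is counted by the rank of the larger one in exactly one of the
  two removal orders.\<close>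
lemma lex_rank_exchange_sign:
  assumes "finite S" "p \<in> S" "q \<in> S" "p \<noteq> q"
  shows "(-1::complex) ^ (lex_rank p S + lex_rank q (S - {p}))
       = - ((-1) ^ (lex_rank q S + lex_rank p (S - {q})))"
proof (cases "lex_less q p")
  case True
  then show ?thesis
    using lex_rank_Diff_less[OF assms(1,3) True] lex_rank_Diff_not_less[OF lex_less_asym[OF True]]
    by (simp add: add.commute)
next
  case False
  then have "lex_less p q" using lex_less_linear assms(4) by blast
  then show ?thesis
    using lex_rank_Diff_less[OF assms(1,2)] lex_rank_Diff_not_less[OF False]
    by (simp add: add.commute)
qed

lemma wedge_one_forms_left:
  assumes "one_form \<omega>" "one_form \<omega>'" and S: "finite S"
  shows "wedge \<omega> (wedge \<omega>' \<eta>) S z = (\<Sum>p\<in>S. \<Sum>q\<in>S. if p = q then 0 else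
      (-1) ^ (lex_rank p S + lex_rank q (S - {p})) * (\<omega> {p} z * \<omega>' {q} z * \<eta> (S - {p} - {q}) z))"
proof -
  have "wedge \<omega> (wedge \<omega>' \<eta>) S z = (\<Sum>p\<in>S. (-1) ^ lex_rank p S * \<omega> {p} z *
       (\<Sum>q\<in>S - {p}. (-1) ^ lex_rank q (S - {p}) * \<omega>' {q} z * \<eta> (S - {p} - {q}) z))"
    using S by (simp add: wedge_one_form_left assms)
  also have "\<dots> = (\<Sum>p\<in>S. \<Sum>q\<in>S - {p}.
      (-1) ^ (lex_rank p S + lex_rank q (S - {p})) * (\<omega> {p} z * \<omega>' {q} z * \<eta> (S - {p} - {q}) z))"
    by (simp add: sum_distrib_left power_add mult_ac)
  also have "\<dots> = (\<Sum>p\<in>S. \<Sum>q\<in>S. if p = q then 0 else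
      (-1) ^ (lex_rank p S + lex_rank q (S - {p})) * (\<omega> {p} z * \<omega>' {q} z * \<eta> (S - {p} - {q}) z))"
    by (intro sum.cong refl sum.mono_neutral_cong_left) (use S in auto)
  finally show ?thesis .
qed

lemma wedge_one_forms_anticommute:
  assumes "one_form \<omega>" "one_form \<omega>'"
  shows "wedge \<omega> (wedge \<omega>' \<eta>) S z = - wedge \<omega>' (wedge \<omega> \<eta>) S z"
proof (cases "finite S")
  case S: True
  have "wedge \<omega>' (wedge \<omega> \<eta>) S z = (\<Sum>p\<in>S. \<Sum>q\<in>S. if q = p then 0 else
      (-1) ^ (lex_rank q S + lex_rank p (S - {q})) * (\<omega>' {q} z * \<omega> {p} z * \<eta> (S - {q} - {p}) z))"
    by (subst sum.swap) (rule wedge_one_forms_left[OF assms(2,1) S])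
  also have "\<dots> = - (\<Sum>p\<in>S. \<Sum>q\<in>S. if p = q then 0 else
      (-1) ^ (lex_rank p S + lex_rank q (S - {p})) * (\<omega> {p} z * \<omega>' {q} z * \<eta> (S - {p} - {q}) z))"
    unfolding sum_negf[symmetric]
  proof (intro sum.cong refl)
    fix p q assume pq: "p \<in> S" "q \<in> S"
    have e: "S - {q} - {p} = S - {p} - {q}" by blast
    show "(if q = p then 0 else
        (-1) ^ (lex_rank q S + lex_rank p (S - {q})) * (\<omega>' {q} z * \<omega> {p} z * \<eta> (S - {q} - {p}) z))
      = - (if p = q then 0 else
        (-1) ^ (lex_rank p S + lex_rank q (S - {p})) * (\<omega> {p} z * \<omega>' {q} z * \<eta> (S - {p} - {q}) z))"
    proof (cases "p = q")
      case False
      then show ?thesis using lex_rank_exchange_sign[OF S pq False]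
        by (simp only: e if_False eq_commute[of q p]) (simp add: algebra_simps)
    qed simp
  qed
  finally show ?thesis using wedge_one_forms_left[OF assms S] by simp
qed simp

lemma inv_count_insert:
  assumes "p \<notin> B" "finite B" "finite C"
  shows "inv_count (insert p B) C = inv_count B C + card {c\<in>C. lex_less c p}"
proof -
  have split: "{(a, b). a \<in> insert p B \<and> b \<in> C \<and> lex_less b a} =
     {(a, b). a \<in> B \<and> b \<in> C \<and> lex_less b a} \<union> Pair p ` {c\<in>C. lex_less c p}"
    by auto
  have "finite {(a, b). a \<in> B \<and> b \<in> C \<and> lex_less b a}"
    by (rule finite_subset[of _ "B \<times> C"]) (use assms in auto)
  moreover have "{(a, b). a \<in> B \<and> b \<in> C \<and> lex_less b a} \<inter> Pair p ` {c\<in>C. lex_less c p} = {}"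
    using assms by auto
  ultimately show ?thesis
    unfolding inv_count_def split using assms by (simp add: card_Un_disjoint card_image inj_on_def)
qed

lemma inv_count_insert_lex_rank:
  assumes B: "B \<subseteq> S - {p}" and S: "finite S"
  shows "inv_count (insert p B) (S - insert p B) + lex_rank p (insert p B)
       = lex_rank p S + inv_count B (S - {p} - B)"
proof -
  have B_fin: "finite B" using B S by (auto intro: finite_subset)
  have "{x\<in>S. lex_less x p} = {x\<in>B. lex_less x p} \<union> {c\<in>S - {p} - B. lex_less c p}"
    using B by (auto simp: lex_less_irrefl)
  then have "lex_rank p S = card {x\<in>B. lex_less x p} + card {c\<in>S - {p} - B. lex_less c p}"
    unfolding lex_rank_def using S B_fin by (subst card_Un_disjoint[symmetric]) auto
  moreover have "lex_rank p (insert p B) = card {x\<in>B. lex_less x p}"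
    unfolding lex_rank_def by (rule arg_cong[where f=card]) (auto simp: lex_less_irrefl)
  moreover have "S - insert p B = S - {p} - B" by blast
  moreover have "p \<notin> B" using B by blast
  ultimately show ?thesis
    using inv_count_insert[of p B "S - {p} - B"] B_fin S by simp
qed

lemma sum_Pow_containing:
  assumes "p \<in> S"
  shows "(\<Sum>A\<in>{A\<in>Pow S. p \<in> A}. g A) = (\<Sum>B\<in>Pow (S - {p}). g (insert p B))"
proof -
  have "{A\<in>Pow S. p \<in> A} = insert p ` Pow (S - {p})"
  proof
    show "{A\<in>Pow S. p \<in> A} \<subseteq> insert p ` Pow (S - {p})"
    proof
      fix A assume "A \<in> {A\<in>Pow S. p \<in> A}"
      then have "A = insert p (A - {p})" "A - {p} \<in> Pow (S - {p})" by auto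
      then show "A \<in> insert p ` Pow (S - {p})" by (rule rev_image_eqI[rotated])
    qed
  qed (use assms in auto)
  moreover have "inj_on (insert p) (Pow (S - {p}))"
    by (rule inj_onI) (metis Diff_insert_absorb PowD subset_Diff_insert)
  ultimately show ?thesis by (simp add: sum.reindex)
qed

lemma wedge_assoc_one_form:
  assumes \<omega>: "one_form \<omega>"
  shows "wedge (wedge \<omega> \<omega>') \<eta> S z = wedge \<omega> (wedge \<omega>' \<eta>) S z"
proof (cases "finite S")
  case S: True
  have "wedge (wedge \<omega> \<omega>') \<eta> S z = (\<Sum>A\<in>Pow S. (-1) ^ inv_count A (S - A) *
      (\<Sum>p\<in>A. (-1) ^ lex_rank p A * \<omega> {p} z * \<omega>' (A - {p}) z) * \<eta> (S - A) z)"
    unfolding wedge_def[of "wedge \<omega> \<omega>'"] using S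
    by (simp add: wedge_one_form_left[OF \<omega>] finite_subset)
  also have "\<dots> = (\<Sum>A\<in>Pow S. \<Sum>p\<in>{p\<in>S. p \<in> A}.
      (-1) ^ (inv_count A (S - A) + lex_rank p A) * (\<omega> {p} z * \<omega>' (A - {p}) z * \<eta> (S - A) z))"
  proof (rule sum.cong[OF refl])
    fix A assume "A \<in> Pow S"
    then have "{p\<in>S. p \<in> A} = A" by auto
    then show "(-1) ^ inv_count A (S - A) *
        (\<Sum>p\<in>A. (-1) ^ lex_rank p A * \<omega> {p} z * \<omega>' (A - {p}) z) * \<eta> (S - A) z =
      (\<Sum>p\<in>{p\<in>S. p \<in> A}. (-1) ^ (inv_count A (S - A) + lex_rank p A) *
        (\<omega> {p} z * \<omega>' (A - {p}) z * \<eta> (S - A) z))"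
      by (simp add: sum_distrib_left sum_distrib_right power_add mult.assoc)
  qed
  also have "\<dots> = (\<Sum>p\<in>S. \<Sum>A\<in>{A\<in>Pow S. p \<in> A}.
      (-1) ^ (inv_count A (S - A) + lex_rank p A) * (\<omega> {p} z * \<omega>' (A - {p}) z * \<eta> (S - A) z))"
    by (rule sum.swap_restrict) (use S in auto)
  also have "\<dots> = (\<Sum>p\<in>S. \<Sum>B\<in>Pow (S - {p}).
      (-1) ^ (lex_rank p S + inv_count B (S - {p} - B)) * (\<omega> {p} z * \<omega>' B z * \<eta> (S - {p} - B) z))"
  proof (rule sum.cong[OF refl])
    fix p assume p: "p \<in> S"
    show "(\<Sum>A\<in>{A\<in>Pow S. p \<in> A}. (-1) ^ (inv_count A (S - A) + lex_rank p A) *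
        (\<omega> {p} z * \<omega>' (A - {p}) z * \<eta> (S - A) z)) =
      (\<Sum>B\<in>Pow (S - {p}). (-1) ^ (lex_rank p S + inv_count B (S - {p} - B)) *
        (\<omega> {p} z * \<omega>' B z * \<eta> (S - {p} - B) z))"
      unfolding sum_Pow_containing[OF p]
    proof (rule sum.cong[OF refl])
      fix B assume B: "B \<in> Pow (S - {p})"
      then have "insert p B - {p} = B" "S - insert p B = S - {p} - B" by auto
      with inv_count_insert_lex_rank[of B S p] B S
      show "(-1) ^ (inv_count (insert p B) (S - insert p B) + lex_rank p (insert p B)) *
          (\<omega> {p} z * \<omega>' (insert p B - {p}) z * \<eta> (S - insert p B) z) =
        (-1) ^ (lex_rank p S + inv_count B (S - {p} - B)) * (\<omega> {p} z * \<omega>' B z * \<eta> (S - {p} - B) z)"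
        by simp
    qed
  qed
  also have "\<dots> = wedge \<omega> (wedge \<omega>' \<eta>) S z"
    using S unfolding wedge_one_form_left[OF \<omega> S] wedge_def[of \<omega>']
    by (simp add: sum_distrib_left power_add mult.assoc mult.left_commute)
  finally show ?thesis .
qed simp

lemma wedge_sum_left:
  assumes "finite J"
  shows "wedge (\<lambda>S z. \<Sum>j\<in>J. c j z * \<omega> j S z) \<eta> S z = (\<Sum>j\<in>J. c j z * wedge (\<omega> j) \<eta> S z)"
proof (cases "finite S")
  case True
  have "wedge (\<lambda>S z. \<Sum>j\<in>J. c j z * \<omega> j S z) \<eta> S z =
     (\<Sum>A\<in>Pow S. \<Sum>j\<in>J. c j z * ((-1) ^ inv_count A (S - A) * \<omega> j A z * \<eta> (S - A) z))"
    using True unfolding wedge_def by (simp add: sum_distrib_left sum_distrib_right mult_ac)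
  also have "\<dots> = (\<Sum>j\<in>J. c j z * wedge (\<omega> j) \<eta> S z)"
    using True unfolding wedge_def by (subst sum.swap) (simp add: sum_distrib_left)
  finally show ?thesis .
qed simp

lemma wedge_sum_right:
  assumes "finite J"
  shows "wedge \<omega> (\<lambda>S z. \<Sum>j\<in>J. c j z * \<eta> j S z) S z = (\<Sum>j\<in>J. c j z * wedge \<omega> (\<eta> j) S z)"
proof (cases "finite S")
  case True
  have "wedge \<omega> (\<lambda>S z. \<Sum>j\<in>J. c j z * \<eta> j S z) S z =
     (\<Sum>A\<in>Pow S. \<Sum>j\<in>J. c j z * ((-1) ^ inv_count A (S - A) * \<omega> A z * \<eta> j (S - A) z))"
    using True unfolding wedge_def by (simp add: sum_distrib_left mult_ac)
  also have "\<dots> = (\<Sum>j\<in>J. c j z * wedge \<omega> (\<eta> j) S z)"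
    using True unfolding wedge_def by (subst sum.swap) (simp add: sum_distrib_left)
  finally show ?thesis .
qed simp

lemma wedge_scale_left: "wedge (\<lambda>S z. c z * \<omega> S z) \<eta> S z = c z * wedge \<omega> \<eta> S z"
  using wedge_sum_left[of "{()}" "\<lambda>_. c" "\<lambda>_. \<omega>" \<eta> S z] by simp

lemma wedge_uminus_right: "wedge \<omega> (\<lambda>S z. - \<eta> S z) S z = - wedge \<omega> \<eta> S z"
  using wedge_sum_right[of "{()}" \<omega> "\<lambda>_ _. -1" "\<lambda>_. \<eta>" S z] by simp

lemma wedge_cong_right:
  "(\<And>S z. finite S \<Longrightarrow> \<eta> S z = \<eta>' S z) \<Longrightarrow> wedge \<omega> \<eta> S z = wedge \<omega> \<eta>' S z"
  unfolding wedge_def by (auto intro!: sum.cong)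

lemma wedge_scal_form_one_left: "finite S \<Longrightarrow> wedge (scal_form (\<lambda>_. 1)) \<eta> S z = \<eta> S z"
proof -
  assume S: "finite S"
  have "wedge (scal_form (\<lambda>_. 1)) \<eta> S z =
      (\<Sum>A\<in>{{}}. (-1) ^ inv_count A (S - A) * scal_form (\<lambda>_. 1) A z * \<eta> (S - A) z)"
    unfolding wedge_def using S by (simp only: if_True, intro sum.mono_neutral_right) (auto simp: scal_form_def)
  then show ?thesis by (simp add: inv_count_def scal_form_def)
qed

lemma wedge_list_wedge:
  assumes "\<forall>\<omega>\<in>set \<omega>s. one_form \<omega>" "finite S"
  shows "wedge (wedge_list \<omega>s) \<eta> S z = foldr wedge \<omega>s \<eta> S z"
  using assms
proof (induction \<omega>s arbitrary: S z)
  case (Cons \<omega> \<omega>s)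
  then have "wedge (wedge_list (\<omega> # \<omega>s)) \<eta> S z = wedge \<omega> (wedge (wedge_list \<omega>s) \<eta>) S z"
    by (simp add: wedge_assoc_one_form)
  also have "\<dots> = wedge \<omega> (foldr wedge \<omega>s \<eta>) S z"
    by (rule wedge_cong_right) (use Cons in auto)
  finally show ?case by simp
qed (simp add: wedge_scal_form_one_left)

lemma foldr_wedge_sum_right:
  assumes "finite J"
  shows "foldr wedge \<omega>s (\<lambda>S z. \<Sum>j\<in>J. c j z * \<eta> j S z) S z = (\<Sum>j\<in>J. c j z * foldr wedge \<omega>s (\<eta> j) S z)"
proof (induction \<omega>s arbitrary: S z)
  case (Cons \<omega> \<omega>s)
  have "foldr wedge \<omega>s (\<lambda>S z. \<Sum>j\<in>J. c j z * \<eta> j S z) = (\<lambda>S z. \<Sum>j\<in>J. c j z * foldr wedge \<omega>s (\<eta> j) S z)"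
    using Cons by (intro ext)
  then show ?case by (simp add: wedge_sum_right[OF assms])
qed simp

lemma foldr_wedge_sum_at:
  assumes "finite J"
  shows "foldr wedge (\<omega>s @ (\<lambda>S z. \<Sum>j\<in>J. c j z * \<omega> j S z) # \<omega>s') \<eta> S z =
    (\<Sum>j\<in>J. c j z * foldr wedge (\<omega>s @ \<omega> j # \<omega>s') \<eta> S z)"
proof (induction \<omega>s arbitrary: S z)
  case (Cons \<omega>\<^sub>0 \<omega>s)
  have "foldr wedge (\<omega>s @ (\<lambda>S z. \<Sum>j\<in>J. c j z * \<omega> j S z) # \<omega>s') \<eta> =
     (\<lambda>S z. \<Sum>j\<in>J. c j z * foldr wedge (\<omega>s @ \<omega> j # \<omega>s') \<eta> S z)"
    using Cons by (intro ext)
  then show ?case by (simp add: wedge_sum_right[OF assms])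
qed (simp add: wedge_sum_left[OF assms])

lemma foldr_wedge_cong:
  assumes "\<And>S z. finite S \<Longrightarrow> \<eta> S z = \<eta>' S z" "finite S"
  shows "foldr wedge \<omega>s \<eta> S z = foldr wedge \<omega>s \<eta>' S z"
  using assms(2)
proof (induction \<omega>s arbitrary: S z)
  case (Cons \<omega> \<omega>s)
  then show ?case by (simp, intro wedge_cong_right)
qed (simp add: assms(1))

lemma foldr_wedge_swap:
  assumes "one_form \<omega>" "one_form \<omega>'"
  shows "foldr wedge (\<omega>s @ \<omega> # \<omega>' # \<omega>s') \<eta> S z = - foldr wedge (\<omega>s @ \<omega>' # \<omega> # \<omega>s') \<eta> S z"
proof (induction \<omega>s arbitrary: S z)
  case (Cons \<omega>\<^sub>0 \<omega>s)
  have "foldr wedge (\<omega>s @ \<omega> # \<omega>' # \<omega>s') \<eta> = (\<lambda>S z. - foldr wedge (\<omega>s @ \<omega>' # \<omega> # \<omega>s') \<eta> S z)"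
    using Cons by (intro ext)
  then show ?case by (simp add: wedge_uminus_right)
qed (simp add: wedge_one_forms_anticommute[OF assms])

lemma foldr_wedge_repeated:
  assumes "one_form \<omega>" "\<forall>\<omega>'\<in>set \<omega>s'. one_form \<omega>'" "\<omega> \<in> set \<omega>s'"
  shows "foldr wedge (\<omega>s @ \<omega> # \<omega>s') \<eta> S z = 0"
proof -
  obtain us vs where split: "\<omega>s' = us @ \<omega> # vs"
    using split_list[OF assms(3)] by blast
  have "\<forall>\<omega>'\<in>set us. one_form \<omega>'" using assms(2) split by simp
  then show ?thesis unfolding split
  proof (induction us arbitrary: \<omega>s)
    case Nil
    then show ?case using foldr_wedge_swap[OF assms(1) assms(1), of \<omega>s vs \<eta> S z] by simp
  next
    case (Cons u us)
    have "foldr wedge (\<omega>s @ \<omega> # (u # us) @ \<omega> # vs) \<eta> S z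
        = - foldr wedge ((\<omega>s @ [u]) @ \<omega> # us @ \<omega> # vs) \<eta> S z"
      using foldr_wedge_swap[OF assms(1), of u \<omega>s "us @ \<omega> # vs" \<eta> S z] Cons.prems by simp
    also have "foldr wedge ((\<omega>s @ [u]) @ \<omega> # us @ \<omega> # vs) \<eta> S z = 0"
      using Cons.prems by (intro Cons.IH) simp
    finally show ?case by simp
  qed
qed

lemma dzbar_diff_telescope:
  "1 \<le> k \<Longrightarrow> dzbar_diff 1 k i = (\<lambda>S z. \<Sum>\<alpha>\<in>{1..<k}. 1 * dzbar_diff \<alpha> (\<alpha> + 1) i S z)"
proof (induction k rule: nat_induct_at_least)
  case (Suc k)
  show ?case
  proof (intro ext)
    fix S z
    have IH: "(\<Sum>\<alpha>\<in>{1..<k}. 1 * dzbar_diff \<alpha> (\<alpha> + 1) i S z) = dzbar_diff 1 k i S z"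
      using Suc.IH by simp
    have "(\<Sum>\<alpha>\<in>{1..<Suc k}. 1 * dzbar_diff \<alpha> (\<alpha> + 1) i S z)
        = (\<Sum>\<alpha>\<in>{1..<k}. 1 * dzbar_diff \<alpha> (\<alpha> + 1) i S z) + dzbar_diff k (k + 1) i S z"
      using Suc.hyps by (simp add: sum.atLeastLessThan_Suc)
    then show "dzbar_diff 1 (Suc k) i S z = (\<Sum>\<alpha>\<in>{1..<Suc k}. 1 * dzbar_diff \<alpha> (\<alpha> + 1) i S z)"
      unfolding IH by (simp add: dzbar_diff_def)
  qed
qed (simp add: dzbar_diff_def fun_eq_iff)

lemma foldr_wedge_telescope_vanishes:
  assumes k: "1 \<le> k" and i: "i \<in> set js"
    and chain: "\<forall>\<alpha>\<in>{1..<k}. dzbar_diff \<alpha> (\<alpha> + 1) i \<in> set \<omega>s"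
    and \<omega>s: "\<forall>\<omega>\<in>set \<omega>s. one_form \<omega>"
  shows "foldr wedge (map (dzbar_diff 1 k) js @ \<omega>s) \<eta> S z = 0"
proof -
  obtain us vs where js: "js = us @ i # vs"
    using split_list[OF i] by blast
  have "foldr wedge (map (dzbar_diff 1 k) js @ \<omega>s) \<eta> S z =
      foldr wedge (map (dzbar_diff 1 k) us @
        (\<lambda>S z. \<Sum>\<alpha>\<in>{1..<k}. 1 * dzbar_diff \<alpha> (\<alpha> + 1) i S z) # map (dzbar_diff 1 k) vs @ \<omega>s) \<eta> S z"
    unfolding js dzbar_diff_telescope[OF k, symmetric] by simp
  also have "\<dots> = (\<Sum>\<alpha>\<in>{1..<k}. 1 * foldr wedge (map (dzbar_diff 1 k) us @
      dzbar_diff \<alpha> (\<alpha> + 1) i # map (dzbar_diff 1 k) vs @ \<omega>s) \<eta> S z)"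
    by (rule foldr_wedge_sum_at) simp
  also have "\<dots> = 0"
  proof (intro sum.neutral ballI)
    fix \<alpha> assume "\<alpha> \<in> {1..<k}"
    then have "foldr wedge (map (dzbar_diff 1 k) us @
        dzbar_diff \<alpha> (\<alpha> + 1) i # map (dzbar_diff 1 k) vs @ \<omega>s) \<eta> S z = 0"
      using chain \<omega>s by (intro foldr_wedge_repeated) (auto simp: one_form_dzbar_diff)
    then show "1 * foldr wedge (map (dzbar_diff 1 k) us @
        dzbar_diff \<alpha> (\<alpha> + 1) i # map (dzbar_diff 1 k) vs @ \<omega>s) \<eta> S z = 0"
      by simp
  qed
  finally show ?thesis .
qed

text \<open>The set I consists of indices i whose whole chain of links
  \<open>dzbar_diff \<alpha> (\<alpha> + 1) i\<close>, \<open>\<alpha> < m\<close>, already occurs among \<open>\<omega>s\<close>. Expanding the propagator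
  at \<open>\<alpha> = m\<close> loses at most the one index it omits, and adds the link at m for all others.\<close>
lemma foldr_wedge_propagators_vanish:
  fixes DP :: "nat \<Rightarrow> form" and cP :: "nat \<Rightarrow> nat \<Rightarrow> pt \<Rightarrow> complex"
  assumes DP: "\<And>\<alpha>. DP \<alpha> = (\<lambda>S z. \<Sum>j\<in>{1..d}. cP \<alpha> j z *
      wedge_list (map (dzbar_diff \<alpha> (\<alpha> + 1)) (filter (\<lambda>i. i \<noteq> j) [1..<d+1])) S z)"
  shows "1 \<le> m \<Longrightarrow> m \<le> k \<Longrightarrow> I \<subseteq> {1..d} \<Longrightarrow> k - m < card I \<Longrightarrow>
    \<forall>i\<in>I. \<forall>\<alpha>\<in>{1..<m}. dzbar_diff \<alpha> (\<alpha> + 1) i \<in> set \<omega>s \<Longrightarrow> \<forall>\<omega>\<in>set \<omega>s. one_form \<omega> \<Longrightarrow>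
    finite S \<Longrightarrow> foldr wedge (map (dzbar_diff 1 k) [1..<d+1] @ \<omega>s) (wedge_list (map DP [m..<k])) S z = 0"
proof (induction "k - m" arbitrary: m I \<omega>s S z)
  case 0
  then obtain i where "i \<in> I" by fastforce
  with 0 show ?case
    by (intro foldr_wedge_telescope_vanishes[of k i]) auto
next
  case (Suc r)
  define links where "links j = map (dzbar_diff m (m + 1)) (filter (\<lambda>i. i \<noteq> j) [1..<d+1])" for j
  let ?K = "map (dzbar_diff 1 k) [1..<d+1] @ \<omega>s"
  let ?R = "wedge_list (map DP [Suc m..<k])"
  have links: "\<forall>\<omega>\<in>set (links j). one_form \<omega>" for j
    by (auto simp: links_def one_form_dzbar_diff)
  have expand: "wedge_list (map DP [m..<k])
      = (\<lambda>S z. \<Sum>j\<in>{1..d}. cP m j z * wedge (wedge_list (links j)) ?R S z)"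
    using Suc.hyps by (intro ext) (simp add: upt_conv_Cons DP[of m] links_def wedge_sum_left)
  have "foldr wedge ?K (wedge_list (map DP [m..<k])) S z =
     (\<Sum>j\<in>{1..d}. cP m j z * foldr wedge ?K (wedge (wedge_list (links j)) ?R) S z)"
    unfolding expand by (rule foldr_wedge_sum_right) simp
  also have "\<dots> = (\<Sum>j\<in>{1..d}. cP m j z * foldr wedge (?K @ links j) ?R S z)"
    unfolding foldr_append o_def
    by (intro sum.cong refl arg_cong2[where f="(*)"] foldr_wedge_cong wedge_list_wedge links Suc.prems(7))
  also have "\<dots> = 0"
  proof (intro sum.neutral ballI)
    fix j
    have "finite I" using Suc.prems(3) finite_subset by blast
    then have "card I \<le> Suc (card (I - {j}))"
      by (cases "j \<in> I") (auto simp: card_Diff_singleton_if card_gt_0_iff)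
    then have "k - Suc m < card (I - {j})"
      using Suc.prems(4) Suc.hyps(2) by arith
    moreover have "\<forall>i\<in>I - {j}. \<forall>\<alpha>\<in>{1..<Suc m}. dzbar_diff \<alpha> (\<alpha> + 1) i \<in> set (\<omega>s @ links j)"
    proof (intro ballI)
      fix i \<alpha> assume i: "i \<in> I - {j}" and \<alpha>: "\<alpha> \<in> {1..<Suc m}"
      show "dzbar_diff \<alpha> (\<alpha> + 1) i \<in> set (\<omega>s @ links j)"
      proof (cases "\<alpha> = m")
        case True
        have "i \<in> set (filter (\<lambda>i. i \<noteq> j) [1..<d+1])" using i Suc.prems(3) by auto
        then have "dzbar_diff m (m + 1) i \<in> set (links j)"
          unfolding links_def set_map by (rule imageI)
        then show ?thesis unfolding True by simp
      qed (use i \<alpha> Suc.prems(5) in auto)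
    qed
    ultimately have "foldr wedge (map (dzbar_diff 1 k) [1..<d+1] @ \<omega>s @ links j) ?R S z = 0"
      using Suc links by (intro Suc.hyps(1)) auto
    then show "cP m j z * foldr wedge (?K @ links j) ?R S z = 0"
      by simp
  qed
  finally show ?case .
qed

section \<open>Wirtinger derivatives of smooth coefficients\<close>

text \<open>For a tower \<open>\<Phi>\<close> of entire functions (\<open>\<Phi> m' = \<Phi> (Suc m)\<close>), the algebra generated by
  coordinates, their conjugates and composition with the \<open>\<Phi> m\<close> is closed under Wirtinger
  derivatives. Differentiability matters: \<open>vector_derivative\<close> of a non-differentiable
  function is an unspecified value, so linearity of \<open>wirt\<close> only holds on such a class.\<close>
inductive_set smooth_alg :: "(nat \<Rightarrow> complex \<Rightarrow> complex) \<Rightarrow> (pt \<Rightarrow> complex) set" for \<Phi> where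
  const: "(\<lambda>z. c) \<in> smooth_alg \<Phi>"
| coord: "(\<lambda>z. z q) \<in> smooth_alg \<Phi>"
| cnj_coord: "(\<lambda>z. cnj (z q)) \<in> smooth_alg \<Phi>"
| add: "f \<in> smooth_alg \<Phi> \<Longrightarrow> g \<in> smooth_alg \<Phi> \<Longrightarrow> (\<lambda>z. f z + g z) \<in> smooth_alg \<Phi>"
| mult: "f \<in> smooth_alg \<Phi> \<Longrightarrow> g \<in> smooth_alg \<Phi> \<Longrightarrow> (\<lambda>z. f z * g z) \<in> smooth_alg \<Phi>"
| comp: "f \<in> smooth_alg \<Phi> \<Longrightarrow> (\<lambda>z. \<Phi> m (f z)) \<in> smooth_alg \<Phi>"

lemma smooth_alg_diff: "f \<in> smooth_alg \<Phi> \<Longrightarrow> g \<in> smooth_alg \<Phi> \<Longrightarrow> (\<lambda>z. f z - g z) \<in> smooth_alg \<Phi>"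
  using smooth_alg.add[of f \<Phi> "\<lambda>z. (-1) * g z"] smooth_alg.mult[OF smooth_alg.const[of "-1"], of g]
  by simp

lemma smooth_alg_sum:
  "finite J \<Longrightarrow> \<forall>j\<in>J. f j \<in> smooth_alg \<Phi> \<Longrightarrow> (\<lambda>z. \<Sum>j\<in>J. f j z) \<in> smooth_alg \<Phi>"
proof (induction J rule: finite_induct)
  case empty
  then show ?case using smooth_alg.const[of 0] by simp
next
  case (insert x F)
  then show ?case using smooth_alg.add[of "f x" \<Phi> "\<lambda>z. \<Sum>j\<in>F. f j z"] by simp
qed

locale derivative_tower =
  fixes \<Phi> :: "nat \<Rightarrow> complex \<Rightarrow> complex"
  assumes has_derivative_tower: "\<And>m w. (\<Phi> m has_field_derivative \<Phi> (Suc m) w) (at w)"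
begin

lemma smooth_alg_has_directional_derivative:
  assumes "f \<in> smooth_alg \<Phi>"
  shows "\<exists>f'\<in>smooth_alg \<Phi>. \<forall>z.
    ((\<lambda>t::real. f (z(p := z p + v * of_real t))) has_vector_derivative f' z) (at 0)"
  using assms
proof induction
  case (const c)
  show ?case by (rule bexI[of _ "\<lambda>z. 0"]) (auto intro: smooth_alg.const)
next
  case (coord q)
  show ?case
  proof (cases "q = p")
    case True
    then have "\<forall>z. ((\<lambda>t::real. (z(p := z p + v * of_real t)) q) has_vector_derivative v) (at 0)"
      by (auto intro!: derivative_eq_intros)
    then show ?thesis by (intro bexI[of _ "\<lambda>z. v"]) (auto intro: smooth_alg.const)
  qed (auto intro!: bexI[of _ "\<lambda>z. 0"] smooth_alg.const)
next
  case (cnj_coord q)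
  show ?case
  proof (cases "q = p")
    case True
    then have "\<forall>z. ((\<lambda>t::real. cnj ((z(p := z p + v * of_real t)) q)) has_vector_derivative cnj v) (at 0)"
      by (auto intro!: derivative_eq_intros)
    then show ?thesis by (intro bexI[of _ "\<lambda>z. cnj v"]) (auto intro: smooth_alg.const)
  qed (auto intro!: bexI[of _ "\<lambda>z. 0"] smooth_alg.const)
next
  case (add f g)
  then obtain f' g' where f': "f' \<in> smooth_alg \<Phi>" and g': "g' \<in> smooth_alg \<Phi>"
    and "\<forall>z. ((\<lambda>t::real. f (z(p := z p + v * of_real t))) has_vector_derivative f' z) (at 0)"
    and "\<forall>z. ((\<lambda>t::real. g (z(p := z p + v * of_real t))) has_vector_derivative g' z) (at 0)"
    by blast
  then have "\<forall>z. ((\<lambda>t::real. f (z(p := z p + v * of_real t)) + g (z(p := z p + v * of_real t)))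
      has_vector_derivative (f' z + g' z)) (at 0)"
    using has_vector_derivative_add by blast
  then show ?case
    using smooth_alg.add[OF f' g'] by (rule bexI[where x="\<lambda>z. f' z + g' z"])
next
  case (mult f g)
  then obtain f' g' where f': "f' \<in> smooth_alg \<Phi>" and g': "g' \<in> smooth_alg \<Phi>"
    and "\<forall>z. ((\<lambda>t::real. f (z(p := z p + v * of_real t))) has_vector_derivative f' z) (at 0)"
    and "\<forall>z. ((\<lambda>t::real. g (z(p := z p + v * of_real t))) has_vector_derivative g' z) (at 0)"
    by blast
  then have "\<forall>z. ((\<lambda>t::real. f (z(p := z p + v * of_real t)) * g (z(p := z p + v * of_real t)))
      has_vector_derivative (f z * g' z + f' z * g z)) (at 0)"
    using has_vector_derivative_mult by fastforce
  then show ?case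
    using smooth_alg.add[OF smooth_alg.mult[OF mult(1) g'] smooth_alg.mult[OF f' mult(2)]]
    by (rule bexI[where x="\<lambda>z. f z * g' z + f' z * g z"])
next
  case (comp f m)
  then obtain f' where f': "f' \<in> smooth_alg \<Phi>"
    and "\<forall>z. ((\<lambda>t::real. f (z(p := z p + v * of_real t))) has_vector_derivative f' z) (at 0)"
    by blast
  then have "\<forall>z. ((\<lambda>t::real. \<Phi> m (f (z(p := z p + v * of_real t))))
      has_vector_derivative (f' z * \<Phi> (Suc m) (f z))) (at 0)"
    using field_vector_diff_chain_at has_derivative_tower by (fastforce simp: o_def)
  then show ?case
    using smooth_alg.mult[OF f' smooth_alg.comp[OF comp(1)]]
    by (rule bexI[where x="\<lambda>z. f' z * \<Phi> (Suc m) (f z)"])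
qed

lemma smooth_alg_directional_derivative:
  assumes "f \<in> smooth_alg \<Phi>"
  obtains f' where "f' \<in> smooth_alg \<Phi>"
    "\<And>z. ((\<lambda>t::real. f (z(p := z p + v * of_real t))) has_vector_derivative f' z) (at 0)"
    "\<And>z. vector_derivative (\<lambda>t::real. f (z(p := z p + v * of_real t))) (at 0) = f' z"
  using smooth_alg_has_directional_derivative[OF assms] vector_derivative_at by metis

lemma wirt_smooth_alg:
  assumes "f \<in> smooth_alg \<Phi>"
  shows "wirt p f \<in> smooth_alg \<Phi>"
proof -
  obtain f1 f2 where f12: "f1 \<in> smooth_alg \<Phi>" "f2 \<in> smooth_alg \<Phi>"
    and "\<And>z. vector_derivative (\<lambda>t::real. f (z(p := z p + 1 * of_real t))) (at 0) = f1 z"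
    and "\<And>z. vector_derivative (\<lambda>t::real. f (z(p := z p + \<i> * of_real t))) (at 0) = f2 z"
    using smooth_alg_directional_derivative[OF assms] by metis
  then have "wirt p f = (\<lambda>z. f1 z * (1/2) + f2 z * (- \<i> / 2))"
    by (auto simp: wirt_def fun_eq_iff field_simps)
  moreover have "(\<lambda>z. f1 z * (1/2) + f2 z * (- \<i> / 2)) \<in> smooth_alg \<Phi>"
    by (intro smooth_alg.add smooth_alg.mult smooth_alg.const f12)
  ultimately show ?thesis by simp
qed

lemma wirt_sum:
  assumes "finite J" "\<forall>j\<in>J. f j \<in> smooth_alg \<Phi>"
  shows "wirt p (\<lambda>z. \<Sum>j\<in>J. c j * f j z) = (\<lambda>z. \<Sum>j\<in>J. c j * wirt p (f j) z)"
proof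
  fix z
  have vd: "vector_derivative (\<lambda>t::real. \<Sum>j\<in>J. c j * f j (z(p := z p + v * of_real t))) (at 0) =
     (\<Sum>j\<in>J. c j * vector_derivative (\<lambda>t::real. f j (z(p := z p + v * of_real t))) (at 0))" for v
  proof (rule vector_derivative_at)
    have "((\<lambda>t::real. f j (z(p := z p + v * of_real t))) has_vector_derivative
        vector_derivative (\<lambda>t::real. f j (z(p := z p + v * of_real t))) (at 0)) (at 0)" if "j \<in> J" for j
      using smooth_alg_directional_derivative[of "f j" p v] assms(2) that by metis
    then show "((\<lambda>t::real. \<Sum>j\<in>J. c j * f j (z(p := z p + v * of_real t))) has_vector_derivative
        (\<Sum>j\<in>J. c j * vector_derivative (\<lambda>t::real. f j (z(p := z p + v * of_real t))) (at 0))) (at 0)"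
      by (intro has_vector_derivative_sum has_vector_derivative_mult_right)
  qed
  have "(\<Sum>j\<in>J. c j * ((a j - \<i> * b j) / 2)) = ((\<Sum>j\<in>J. c j * a j) - \<i> * (\<Sum>j\<in>J. c j * b j)) / 2"
    for a b :: "_ \<Rightarrow> complex"
    by (simp add: sum_divide_distrib[symmetric] sum_subtractf sum_distrib_left algebra_simps)
  then show "wirt p (\<lambda>z. \<Sum>j\<in>J. c j * f j z) z = (\<Sum>j\<in>J. c j * wirt p (f j) z)"
    using vd[of 1] vd[of \<i>] by (simp add: wirt_def)
qed

end

definition sum_linear_on :: "(pt \<Rightarrow> complex) set \<Rightarrow> ((pt \<Rightarrow> complex) \<Rightarrow> pt \<Rightarrow> complex) \<Rightarrow> bool" where
  "sum_linear_on C T \<longleftrightarrow> (\<forall>f\<in>C. T f \<in> C) \<and>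
     (\<forall>(J::nat set) c f. finite J \<longrightarrow> (\<forall>j\<in>J. f j \<in> C) \<longrightarrow>
        T (\<lambda>z. \<Sum>j\<in>J. c j * f j z) = (\<lambda>z. \<Sum>j\<in>J. c j * T (f j) z))"

lemma sum_linear_onD:
  fixes J :: "nat set"
  assumes "sum_linear_on C T" "finite J" "\<forall>j\<in>J. f j \<in> C"
  shows "T (\<lambda>z. \<Sum>j\<in>J. c j * f j z) = (\<lambda>z. \<Sum>j\<in>J. c j * T (f j) z)"
proof -
  have "\<forall>(J::nat set) c f. finite J \<longrightarrow> (\<forall>j\<in>J. f j \<in> C) \<longrightarrow>
      T (\<lambda>z. \<Sum>j\<in>J. c j * f j z) = (\<lambda>z. \<Sum>j\<in>J. c j * T (f j) z)"
    using assms(1) unfolding sum_linear_on_def by (rule conjunct2)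
  then show ?thesis using assms(2,3) by blast
qed

lemma sum_linear_on_id: "sum_linear_on C (\<lambda>f. f)"
  by (simp add: sum_linear_on_def)

lemma sum_linear_on_comp:
  assumes T: "sum_linear_on C T" and T': "sum_linear_on C T'"
  shows "sum_linear_on C (\<lambda>f. T (T' f))"
  unfolding sum_linear_on_def
proof (intro conjI allI impI ballI)
  fix f assume "f \<in> C"
  then show "T (T' f) \<in> C" using assms unfolding sum_linear_on_def by blast
next
  fix J :: "nat set" and c f assume J: "finite J" "\<forall>j\<in>J. f j \<in> C"
  moreover have "\<forall>j\<in>J. T' (f j) \<in> C" using T' J unfolding sum_linear_on_def by blast
  ultimately show "T (T' (\<lambda>z. \<Sum>j\<in>J. c j * f j z)) = (\<lambda>z. \<Sum>j\<in>J. c j * T (T' (f j)) z)"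
    by (simp only: sum_linear_onD[OF T' J] sum_linear_onD[OF T])
qed

lemma sum_linear_on_funpow: "sum_linear_on C T \<Longrightarrow> sum_linear_on C (T ^^ n)"
proof (induction n)
  case 0
  show ?case unfolding funpow_0 id_def by (rule sum_linear_on_id)
next
  case (Suc n)
  have "sum_linear_on C (\<lambda>f. T ((T ^^ n) f))"
    by (rule sum_linear_on_comp[OF Suc.prems Suc.IH[OF Suc.prems]])
  then show ?case by (simp add: o_def)
qed

lemma (in derivative_tower) sum_linear_on_wirt: "sum_linear_on (smooth_alg \<Phi>) (wirt p)"
  unfolding sum_linear_on_def using wirt_smooth_alg wirt_sum by blast

lemma (in derivative_tower) sum_linear_on_deriv_alpha:
  "sum_linear_on (smooth_alg \<Phi>) (deriv_alpha d \<alpha> nv)"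
proof -
  have "sum_linear_on (smooth_alg \<Phi>) (\<lambda>f. foldr (\<lambda>i g. (wirt (\<alpha>, i) ^^ nv i) g) js f)" for js
  proof (induction js)
    case (Cons i js)
    then show ?case
      using sum_linear_on_comp[OF sum_linear_on_funpow[OF sum_linear_on_wirt]] by simp
  qed (unfold foldr.simps(1) id_def, rule sum_linear_on_id)
  then show ?thesis
    unfolding deriv_alpha_def[abs_def] .
qed

section \<open>The heat kernel and the propagator\<close>

definition sqdist_alg :: "nat \<Rightarrow> nat \<Rightarrow> nat \<Rightarrow> pt \<Rightarrow> complex" where
  "sqdist_alg d a b z = (\<Sum>i\<in>{1..d}. (z (a, i) - z (b, i)) * (cnj (z (a, i)) - cnj (z (b, i))))"

lemma sqdist_alg_smooth_alg: "sqdist_alg d a b \<in> smooth_alg \<Phi>"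
  unfolding sqdist_alg_def[abs_def]
  by (intro smooth_alg_sum ballI smooth_alg.mult smooth_alg_diff smooth_alg.coord smooth_alg.cnj_coord) simp

lemma of_real_sqdist: "of_real (sqdist d a b z) = sqdist_alg d a b z"
  unfolding sqdist_def sqdist_alg_def of_real_sum complex_norm_square by simp

definition heat_tower :: "real \<Rightarrow> nat \<Rightarrow> complex \<Rightarrow> complex" where
  "heat_tower t m w = (-1 / (4 * of_real t)) ^ m * exp (- w / (4 * of_real t))"

lemma heat_tower_has_derivative:
  "0 < t \<Longrightarrow> (heat_tower t m has_field_derivative heat_tower t (Suc m) w) (at w)"
  unfolding heat_tower_def[abs_def] by (auto intro!: derivative_eq_intros simp: field_simps)

definition propagator_tower :: "nat \<Rightarrow> real \<Rightarrow> real \<Rightarrow> nat \<Rightarrow> complex \<Rightarrow> complex" where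
  "propagator_tower d \<epsilon> L m w = integral {\<epsilon>..L} (\<lambda>t. inverse ((2 * of_real pi * \<i> * of_real t) ^ d)
      / (4 * of_real t) * (-1 / (4 * of_real t)) ^ m * exp (- w / (4 * of_real t)))"

lemma propagator_tower_has_derivative:
  assumes "0 < \<epsilon>"
  shows "(propagator_tower d \<epsilon> L m has_field_derivative propagator_tower d \<epsilon> L (Suc m) w) (at w)"
proof -
  define f :: "nat \<Rightarrow> complex \<Rightarrow> real \<Rightarrow> complex"
    where "f m w t = inverse ((2 * of_real pi * \<i> * of_real t) ^ d) / (4 * of_real t)
      * (-1 / (4 * of_real t)) ^ m * exp (- w / (4 * of_real t))" for m w t
  have cont: "continuous_on (UNIV \<times> {\<epsilon>..L}) (\<lambda>(w, t). f m w t)" for m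
  proof -
    have "continuous_on (UNIV \<times> {\<epsilon>..L}) (\<lambda>x. f m (fst x) (snd x))"
      unfolding f_def using assms by (intro continuous_intros) auto
    then show ?thesis by (simp add: case_prod_beta)
  qed
  have "((\<lambda>w. integral (cbox \<epsilon> L) (f m w)) has_field_derivative integral (cbox \<epsilon> L) (f (Suc m) w))
      (at w within UNIV)"
  proof (rule leibniz_rule_field_derivative)
    fix w t assume "t \<in> cbox \<epsilon> L"
    then have "t \<noteq> 0" using assms by auto
    then show "((\<lambda>w. f m w t) has_field_derivative f (Suc m) w t) (at w within UNIV)"
      unfolding f_def by (auto intro!: derivative_eq_intros simp: field_simps)
  next
    fix w
    have "continuous_on {\<epsilon>..L} (f m w)"
      unfolding f_def using assms by (intro continuous_intros) auto
    then show "f m w integrable_on cbox \<epsilon> L" by (simp add: integrable_continuous_interval)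
  next
    show "continuous_on (UNIV \<times> cbox \<epsilon> L) (\<lambda>(w, t). f (Suc m) w t)"
      using cont[of "Suc m"] by (simp only: cbox_interval)
  qed auto
  then show ?thesis unfolding propagator_tower_def[abs_def] f_def by simp
qed

definition dzbar_diff_wedge :: "nat \<Rightarrow> nat \<Rightarrow> nat list \<Rightarrow> (nat \<times> nat) set \<Rightarrow> complex" where
  "dzbar_diff_wedge a b js S = wedge_list (map (dzbar_diff a b) js) S (\<lambda>_. 0)"

lemma wedge_list_dzbar_diff: "wedge_list (map (dzbar_diff a b) js) S z = dzbar_diff_wedge a b js S"
  unfolding dzbar_diff_wedge_def
proof (induction js arbitrary: S)
  case Nil
  then show ?case by (simp add: scal_form_def)
next
  case (Cons j js)
  have "dzbar_diff a b j A z = dzbar_diff a b j A (\<lambda>_. 0)" for A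
    by (simp add: dzbar_diff_def dzbar_def)
  then show ?case unfolding list.map wedge_list.simps wedge_def
    by (intro if_cong refl sum.cong arg_cong2[where f="(*)"]) (simp_all only: Cons.IH)
qed

lemma form_deriv_Kan:
  assumes "0 < t"
  shows "form_deriv d \<alpha> nv (Kan d t a b) = (\<lambda>S z. deriv_alpha d \<alpha> nv
      (\<lambda>z. inverse ((2 * of_real pi * \<i> * of_real t) ^ d) * heat_tower t 0 (sqdist_alg d a b z)) z
      * wedge_list (map (dzbar_diff a b) [1..<d+1]) S z)"
proof (intro ext)
  fix S z
  interpret derivative_tower "heat_tower t"
    by unfold_locales (rule heat_tower_has_derivative[OF assms])
  define K where "K z = inverse ((2 * of_real pi * \<i> * of_real t) ^ d) * heat_tower t 0 (sqdist_alg d a b z)"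
    for z
  have K: "K \<in> smooth_alg (heat_tower t)"
    unfolding K_def[abs_def] by (intro smooth_alg.mult smooth_alg.const smooth_alg.comp sqdist_alg_smooth_alg)
  have "Kan d t a b S = (\<lambda>z. \<Sum>j\<in>{0::nat}. dzbar_diff_wedge a b [1..<d+1] S * K z)"
    unfolding Kan_def smul_form_def K_def heat_tower_def of_real_sqdist[symmetric]
    by (auto simp: wedge_list_dzbar_diff mult.commute simp del: upt_Suc)
  then have "deriv_alpha d \<alpha> nv (Kan d t a b S)
      = (\<lambda>z. \<Sum>j\<in>{0::nat}. dzbar_diff_wedge a b [1..<d+1] S * deriv_alpha d \<alpha> nv K z)"
    using sum_linear_onD[OF sum_linear_on_deriv_alpha, of "{0}" "\<lambda>_. K" d \<alpha> nv
        "\<lambda>_. dzbar_diff_wedge a b [1..<d+1] S"] K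
    by (simp del: upt_Suc)
  then show "form_deriv d \<alpha> nv (Kan d t a b) S z
      = deriv_alpha d \<alpha> nv K z * wedge_list (map (dzbar_diff a b) [1..<d+1]) S z"
    unfolding form_deriv_def by (simp add: wedge_list_dzbar_diff mult.commute del: upt_Suc)
qed

lemma propagator_coefficient:
  assumes "0 < \<epsilon>"
  shows "integral {\<epsilon>..L} (\<lambda>t::real. inverse ((2 * of_real pi * \<i> * of_real t) ^ d)
          * ((cnj (z (a, j)) - cnj (z (b, j))) / (4 * of_real t))
          * exp (- of_real (sqdist d a b z / (4 * t))))
    = (cnj (z (a, j)) - cnj (z (b, j))) * propagator_tower d \<epsilon> L 0 (sqdist_alg d a b z)"
  unfolding propagator_tower_def integral_mult_right[symmetric]
proof (rule integral_cong)
  fix t assume "t \<in> {\<epsilon>..L}"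
  with assms have "t \<noteq> 0" by auto
  then show "inverse ((2 * of_real pi * \<i> * of_real t) ^ d)
          * ((cnj (z (a, j)) - cnj (z (b, j))) / (4 * of_real t))
          * exp (- of_real (sqdist d a b z / (4 * t))) =
      (cnj (z (a, j)) - cnj (z (b, j))) * (inverse ((2 * of_real pi * \<i> * of_real t) ^ d) / (4 * of_real t)
      * (-1 / (4 * of_real t)) ^ 0 * exp (- sqdist_alg d a b z / (4 * of_real t)))"
    unfolding of_real_sqdist[symmetric] by simp
qed

lemma form_deriv_Pan:
  assumes "0 < \<epsilon>"
  shows "form_deriv d \<alpha> nv (Pan d \<epsilon> L a b) = (\<lambda>S z. \<Sum>j\<in>{1..d}.
      ((-1) ^ (j - 1) * deriv_alpha d \<alpha> nv
         (\<lambda>z. (cnj (z (a, j)) - cnj (z (b, j))) * propagator_tower d \<epsilon> L 0 (sqdist_alg d a b z)) z)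
      * wedge_list (map (dzbar_diff a b) (filter (\<lambda>i. i \<noteq> j) [1..<d+1])) S z)"
proof (intro ext)
  fix S z
  interpret derivative_tower "propagator_tower d \<epsilon> L"
    by unfold_locales (rule propagator_tower_has_derivative[OF assms])
  define P where "P j z = (cnj (z (a, j)) - cnj (z (b, j))) * propagator_tower d \<epsilon> L 0 (sqdist_alg d a b z)"
    for j z
  define c where "c j = (-1) ^ (j - 1) * dzbar_diff_wedge a b (filter (\<lambda>i. i \<noteq> j) [1..<d+1]) S" for j
  have P: "P j \<in> smooth_alg (propagator_tower d \<epsilon> L)" for j
    unfolding P_def[abs_def]
    by (intro smooth_alg.mult smooth_alg_diff smooth_alg.cnj_coord smooth_alg.comp sqdist_alg_smooth_alg)
  have "Pan d \<epsilon> L a b S = (\<lambda>z. \<Sum>j\<in>{1..d}. c j * P j z)"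
    unfolding Pan_def P_def c_def propagator_coefficient[OF assms] wedge_list_dzbar_diff
    by (intro ext sum.cong refl) (simp del: upt_Suc add: mult_ac)
  then have "deriv_alpha d \<alpha> nv (Pan d \<epsilon> L a b S) = (\<lambda>z. \<Sum>j\<in>{1..d}. c j * deriv_alpha d \<alpha> nv (P j) z)"
    using sum_linear_onD[OF sum_linear_on_deriv_alpha, of "{1..d}" P] P by simp
  then show "form_deriv d \<alpha> nv (Pan d \<epsilon> L a b) S z = (\<Sum>j\<in>{1..d}. ((-1) ^ (j - 1) *
      deriv_alpha d \<alpha> nv (P j) z) * wedge_list (map (dzbar_diff a b) (filter (\<lambda>i. i \<noteq> j) [1..<d+1])) S z)"
    unfolding form_deriv_def c_def wedge_list_dzbar_diff by (simp del: upt_Suc add: mult_ac)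
qed

lemma W_form_vanishes:
  assumes "1 \<le> k" "k \<le> d" "0 < \<epsilon>"
  shows "W_form d k \<epsilon> L n S z = 0"
proof (cases "finite S")
  case S: True
  define K where "K z = inverse ((2 * of_real pi * \<i> * of_real \<epsilon>) ^ d) * heat_tower \<epsilon> 0 (sqdist_alg d 1 k z)"
    for z
  define DP where "DP \<alpha> = form_deriv d \<alpha> (n \<alpha>) (Pan d \<epsilon> L \<alpha> (\<alpha> + 1))" for \<alpha>
  have dzbar: "\<forall>\<omega>\<in>set (map (dzbar_diff 1 k) [1..<d+1]). one_form \<omega>"
    by (simp add: one_form_dzbar_diff del: upt_Suc)
  have "W_form d k \<epsilon> L n S z =
      deriv_alpha d k (n k) K z * wedge (wedge_list (map (dzbar_diff 1 k) [1..<d+1])) (wedge_list (map DP [1..<k])) S z"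
    unfolding W_form_def form_deriv_Kan[OF assms(3)] K_def DP_def by (rule wedge_scale_left)
  also have "wedge (wedge_list (map (dzbar_diff 1 k) [1..<d+1])) (wedge_list (map DP [1..<k])) S z =
      foldr wedge (map (dzbar_diff 1 k) [1..<d+1] @ []) (wedge_list (map DP [1..<k])) S z"
    using wedge_list_wedge[OF dzbar S] by simp
  also have "\<dots> = 0"
    by (rule foldr_wedge_propagators_vanish[OF DP_def[unfolded form_deriv_Pan[OF assms(3)]], of 1 k "{1..d}"])
      (use assms S in auto)
  finally show ?thesis by simp
qed (simp add: W_form_def)

theorem mainTheorem5:
  fixes d k :: nat and n :: "nat \<Rightarrow> nat \<Rightarrow> nat" and \<epsilon> L :: real
  assumes "1 \<le> d" and "1 \<le> k" and "k \<le> d" and "0 < \<epsilon>" and "\<epsilon> < L"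
  shows "(\<forall>S z. W_form d k \<epsilon> L n S z = 0) \<and> (\<forall>\<Phi>. modified_weight d k \<epsilon> L n \<Phi> = 0)"
proof -
  have W: "W_form d k \<epsilon> L n = (\<lambda>S z. 0)"
    using W_form_vanishes[OF assms(2-4)] by (intro ext)
  have "wedge \<Phi> (\<lambda>S z. 0) S z = 0" for \<Phi> S z
    by (simp add: wedge_def)
  then show ?thesis
    by (simp add: W modified_weight_def)
qed

end
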